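(* Let $f_0:\mathbb{R}^d\to[0,\infty)$ be a probability density, $\lambda>0$, $\bar\epsilon>0$, and assume: for any $\lambda_l<\lambda_h$ in $[\lambda-\bar\epsilon,\lambda+\bar\epsilon]$ and $x,y\in S_{\lambda_h}$, (1) if $x,y$ are disconnected in $S_{\lambda_h}$ then they are disconnected in $S_{\lambda_l}$, and (2) if $x,y$ are connected in $S_{\lambda_l}$ then they are connected in $S_{\lambda_h}$. Let $\mathcal{X}_n$ be a finite subset of $\mathbb{R}^d$, $f:\mathbb{R}^d\to\mathbb{R}$, $\delta>0$, $\eta>0$, and suppose $\epsilon:=\|f-f_0\|_\infty+\eta\le\bar\epsilon$ and $S_{\lambda+\epsilon}\subseteq\hat S_{\delta,\lambda}(f)\subseteq S_{\lambda-\epsilon}$. Then whenever $T(x,y)\ne\hat T(x,y)$ for some $x,y\in\mathbb{R}^d$, we have $\{x,y\}\cap\big(S_{\lambda-\epsilon}\setminus S_{\lambda+\epsilon}\big)\ne\emptyset$.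
   Context: $S_t=\{x:f_0(x)\ge t\}$; "connected in $S$" means lying in the same topological connected component of $S$. $\hat S_{\delta,\lambda}(f)=\bigcup_{x\in\mathcal{X}_n,\,f(x)\ge\lambda}B(x,\delta/2)$ with $B$ the open Euclidean ball. The co-clustering relation $T:\mathbb{R}^d\times\mathbb{R}^d\to\{0,1\}$ has $T(x,y)=1$ if $x,y$ both lie outside $S_\lambda$ or lie in the same connected component of $S_\lambda$, and $T(x,y)=0$ otherwise; $\hat T$ is defined the same way with $S_\lambda$ replaced by $\hat S_{\delta,\lambda}(f)$. *)

theory Defs
  imports "HOL-Analysis.Analysis"
begin

definition upper_level :: "('a \<Rightarrow> real) \<Rightarrow> real \<Rightarrow> 'a set" where
  "upper_level f0 t = {x. f0 x \<ge> t}"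

definition est_level :: "'a::metric_space set \<Rightarrow> ('a \<Rightarrow> real) \<Rightarrow> real \<Rightarrow> real \<Rightarrow> 'a set" where
  "est_level Xn f \<delta> lam = (\<Union>x\<in>{x\<in>Xn. f x \<ge> lam}. ball x (\<delta>/2))"

text \<open>Co-clustering relation: True (value 1) iff both points lie outside S or
  lie in the same connected component of S.\<close>
definition coclust :: "'a::topological_space set \<Rightarrow> 'a \<Rightarrow> 'a \<Rightarrow> bool" where
  "coclust S x y \<longleftrightarrow> (x \<notin> S \<and> y \<notin> S) \<or> connected_component S x y"

definition sup_norm :: "('a \<Rightarrow> real) \<Rightarrow> real" where
  "sup_norm g = (SUP x. \<bar>g x\<bar>)"

end

theory Submission
  imports Defs
begin

text \<open>Write A and B for the level sets of \<open>f0\<close> at \<open>lam + \<epsilon>\<close> and \<open>lam - \<epsilon>\<close>.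
  Both the true level set at \<open>lam\<close> and its estimate lie between A and B. A point outside
  the band B - A is either in A, hence in both sets, or outside B, hence in neither. If one of
  the two points is outside B, both relations are decided by membership alone; if both are
  in A, connectedness in any set between A and B is squeezed between connectedness in A and
  in B, and these coincide by the stability assumption applied to the levels
  \<open>lam - \<epsilon> < lam + \<epsilon>\<close>.\<close>

lemma upper_level_antimono: "s \<le> t \<Longrightarrow> upper_level f t \<subseteq> upper_level f s"
  unfolding upper_level_def by auto

lemma abs_le_sup_norm:
  assumes "bounded (range g)"
  shows "\<bar>g x\<bar> \<le> sup_norm g"
proof -
  have "bdd_above (range (\<lambda>x. \<bar>g x\<bar>))"
    using assms unfolding bounded_iff bdd_above_def by auto
  then show ?thesis
    unfolding sup_norm_def by (rule cSUP_upper[OF UNIV_I])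
qed

lemma sup_norm_nonneg: "bounded (range g) \<Longrightarrow> 0 \<le> sup_norm g"
  using abs_le_sup_norm[of g undefined] by linarith

lemma coclust_eq_if_sandwiched:
  assumes AS: "A \<subseteq> S" and SB: "S \<subseteq> B" and AH: "A \<subseteq> H" and HB: "H \<subseteq> B"
    and x: "x \<in> A \<or> x \<notin> B" and y: "y \<in> A \<or> y \<notin> B"
    and stable: "x \<in> A \<Longrightarrow> y \<in> A \<Longrightarrow> connected_component B x y \<Longrightarrow> connected_component A x y"
  shows "coclust S x y = coclust H x y"
proof (cases "x \<in> A \<and> y \<in> A")
  case True
  have "connected_component S x y \<longleftrightarrow> connected_component A x y"
    using stable True connected_component_of_subset AS SB by metis
  moreover have "connected_component H x y \<longleftrightarrow> connected_component A x y"
    using stable True connected_component_of_subset AH HB by metis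
  ultimately show ?thesis
    using True AS AH unfolding coclust_def by blast
next
  case False
  then show ?thesis
    using x y AS SB AH HB connected_component_in unfolding coclust_def by blast
qed

theorem lemmaS6:
  fixes f0 f :: "'a::euclidean_space \<Rightarrow> real"
    and Xn :: "'a set"
    and lam \<epsilon>bar \<delta> \<eta> \<epsilon> :: real
  assumes f0_nonneg: "\<And>x. f0 x \<ge> 0"
    and f0_density: "(f0 has_integral 1) UNIV"
    and lam_pos: "lam > 0"
    and epsbar_pos: "\<epsilon>bar > 0"
    and stable: "\<And>lamL lamH x y. lam - \<epsilon>bar \<le> lamL \<Longrightarrow> lamL < lamH \<Longrightarrow> lamH \<le> lam + \<epsilon>bar \<Longrightarrow>
        x \<in> upper_level f0 lamH \<Longrightarrow> y \<in> upper_level f0 lamH \<Longrightarrow>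
        (\<not> connected_component (upper_level f0 lamH) x y \<longrightarrow>
           \<not> connected_component (upper_level f0 lamL) x y) \<and>
        (connected_component (upper_level f0 lamL) x y \<longrightarrow>
           connected_component (upper_level f0 lamH) x y)"
    and Xn_fin: "finite Xn"
    and delta_pos: "\<delta> > 0"
    and eta_pos: "\<eta> > 0"
    and bdd: "bounded (range (\<lambda>x. f x - f0 x))"
    and eps_def: "\<epsilon> = sup_norm (\<lambda>x. f x - f0 x) + \<eta>"
    and eps_le: "\<epsilon> \<le> \<epsilon>bar"
    and incl1: "upper_level f0 (lam + \<epsilon>) \<subseteq> est_level Xn f \<delta> lam"
    and incl2: "est_level Xn f \<delta> lam \<subseteq> upper_level f0 (lam - \<epsilon>)"
  shows "\<forall>x y. coclust (upper_level f0 lam) x y \<noteq> coclust (est_level Xn f \<delta> lam) x y \<longrightarrow>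
           {x, y} \<inter> (upper_level f0 (lam - \<epsilon>) - upper_level f0 (lam + \<epsilon>)) \<noteq> {}"
proof (intro allI impI)
  fix x y
  let ?A = "upper_level f0 (lam + \<epsilon>)" and ?B = "upper_level f0 (lam - \<epsilon>)"
  assume differ: "coclust (upper_level f0 lam) x y \<noteq> coclust (est_level Xn f \<delta> lam) x y"
  have eps_pos: "\<epsilon> > 0"
    using sup_norm_nonneg[OF bdd] eps_def eta_pos by linarith
  have A_sub_S: "?A \<subseteq> upper_level f0 lam" and S_sub_B: "upper_level f0 lam \<subseteq> ?B"
    using eps_pos by (simp_all add: upper_level_antimono)
  have B_conn_imp_A_conn: "connected_component ?A x y"
    if "x \<in> ?A" "y \<in> ?A" "connected_component ?B x y"
    using stable[of "lam - \<epsilon>" "lam + \<epsilon>" x y] that eps_pos eps_le by auto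
  have "\<not> ((x \<in> ?A \<or> x \<notin> ?B) \<and> (y \<in> ?A \<or> y \<notin> ?B))"
    using coclust_eq_if_sandwiched[OF A_sub_S S_sub_B incl1 incl2 _ _ B_conn_imp_A_conn] differ
    by blast
  then show "{x, y} \<inter> (?B - ?A) \<noteq> {}"
    by blast
qed

end
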